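(* Let $V=X\cup Y$ be a finite family of L-frames, where every L-frame in $X$ is anchored at $D$ from above and every L-frame in $Y$ is anchored at $D$ from below. Let $\mathrm{OPT}$, $\mathrm{OPT}_X$, $\mathrm{OPT}_Y$ be minimum dominating sets of the intersection graphs of $V$, $X$, $Y$ respectively. Then $|\mathrm{OPT}_X|\le|\mathrm{OPT}|$ and $|\mathrm{OPT}_Y|\le|\mathrm{OPT}|$.
   Context: Fix a line $D$ of slope $-1$. An L-frame is the union of a closed horizontal segment and a closed vertical segment sharing an endpoint (the corner). It is anchored at $D$ from above if its corner is on $D$ and its segments go right and up from the corner; anchored from below if its corner is on $D$ and its segments go left and down from the corner. The intersection graph joins two L-frames iff they intersect; a dominating set is a vertex set such that every other vertex has a neighbour in it. *)

theory Defs
  imports Complex_Main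
begin

text \<open>The fixed line D of slope -1 is the line x + y = d.\<close>

definition anchored_above :: "real \<Rightarrow> (real \<times> real) set \<Rightarrow> bool" where
  "anchored_above d F \<longleftrightarrow> (\<exists>x y a b. x + y = d \<and> a > 0 \<and> b > 0 \<and>
     F = {(x + t, y) | t. 0 \<le> t \<and> t \<le> a} \<union> {(x, y + t) | t. 0 \<le> t \<and> t \<le> b})"

definition anchored_below :: "real \<Rightarrow> (real \<times> real) set \<Rightarrow> bool" where
  "anchored_below d F \<longleftrightarrow> (\<exists>x y a b. x + y = d \<and> a > 0 \<and> b > 0 \<and>
     F = {(x - t, y) | t. 0 \<le> t \<and> t \<le> a} \<union> {(x, y - t) | t. 0 \<le> t \<and> t \<le> b})"

text \<open>Dominating set of the intersection graph of the frames indexed by S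
  (vertex u is drawn as frame u; distinct vertices adjacent iff their frames meet).\<close>

definition dominating_set :: "('v \<Rightarrow> (real \<times> real) set) \<Rightarrow> 'v set \<Rightarrow> 'v set \<Rightarrow> bool" where
  "dominating_set frame S Dom \<longleftrightarrow> Dom \<subseteq> S \<and>
     (\<forall>v\<in>S - Dom. \<exists>u\<in>Dom. u \<noteq> v \<and> frame u \<inter> frame v \<noteq> {})"

definition min_dominating_set :: "('v \<Rightarrow> (real \<times> real) set) \<Rightarrow> 'v set \<Rightarrow> 'v set \<Rightarrow> bool" where
  "min_dominating_set frame S Dom \<longleftrightarrow> dominating_set frame S Dom \<and>
     (\<forall>Dom'. dominating_set frame S Dom' \<longrightarrow> card Dom \<le> card Dom')"

end

theory Submission
  imports Defs
begin

text \<open>Frames anchored from above lie in the closed half-plane above \<open>D\<close>, frames anchored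
  from below in the one beneath, and each frame meets \<open>D\<close> only at its corner. So two frames
  on the same side that meet a common frame of the other side both contain that frame's
  corner, hence meet each other. Consequently a dominating set of \<open>X \<union> Y\<close> turns into one of
  \<open>X\<close> that is no larger, by replacing each of its \<open>Y\<close>-members having an \<open>X\<close>-neighbour by one
  such neighbour and dropping the others; symmetrically for \<open>Y\<close>.\<close>

lemma anchored_above_subset: "anchored_above d F \<Longrightarrow> F \<subseteq> {p. d \<le> fst p + snd p}"
  unfolding anchored_above_def by auto

lemma anchored_below_subset: "anchored_below d F \<Longrightarrow> F \<subseteq> {p. fst p + snd p \<le> d}"
  unfolding anchored_below_def by auto

lemma anchored_above_meets_line_once:
  assumes "anchored_above d F"
  shows "\<exists>c. F \<inter> {p. fst p + snd p = d} \<subseteq> {c}"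
proof -
  obtain x y a b where "x + y = d"
    "F = {(x + t, y) | t. 0 \<le> t \<and> t \<le> a} \<union> {(x, y + t) | t. 0 \<le> t \<and> t \<le> b}"
    using assms unfolding anchored_above_def by blast
  then have "F \<inter> {p. fst p + snd p = d} \<subseteq> {(x, y)}" by auto
  then show ?thesis ..
qed

lemma anchored_below_meets_line_once:
  assumes "anchored_below d F"
  shows "\<exists>c. F \<inter> {p. fst p + snd p = d} \<subseteq> {c}"
proof -
  obtain x y a b where "x + y = d"
    "F = {(x - t, y) | t. 0 \<le> t \<and> t \<le> a} \<union> {(x, y - t) | t. 0 \<le> t \<and> t \<le> b}"
    using assms unfolding anchored_below_def by blast
  then have "F \<inter> {p. fst p + snd p = d} \<subseteq> {(x, y)}" by auto
  then show ?thesis ..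
qed

lemma meet_via_separated_set:
  assumes "F \<subseteq> A" "F' \<subseteq> A" "G \<subseteq> B" "A \<inter> B \<subseteq> L" "G \<inter> L \<subseteq> {e}"
    and "F \<inter> G \<noteq> {}" "F' \<inter> G \<noteq> {}"
  shows "F \<inter> F' \<noteq> {}"
proof -
  have "e \<in> F" using assms(1,3-6) by blast
  moreover have "e \<in> F'" using assms(2-5,7) by blast
  ultimately show ?thesis by blast
qed

lemma anchored_above_meet_via_anchored_below:
  assumes "anchored_above d F" "anchored_above d F'" "anchored_below d G"
    and "F \<inter> G \<noteq> {}" "F' \<inter> G \<noteq> {}"
  shows "F \<inter> F' \<noteq> {}"
proof -
  obtain e where "G \<inter> {p. fst p + snd p = d} \<subseteq> {e}"
    using anchored_below_meets_line_once[OF assms(3)] ..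
  moreover have "{p. d \<le> fst p + snd p} \<inter> {p. fst p + snd p \<le> d} \<subseteq> {p. fst p + snd p = d}"
    by auto
  ultimately show ?thesis
    using meet_via_separated_set[OF anchored_above_subset[OF assms(1)] anchored_above_subset[OF assms(2)]
        anchored_below_subset[OF assms(3)] _ _ assms(4,5)] by blast
qed

lemma anchored_below_meet_via_anchored_above:
  assumes "anchored_below d F" "anchored_below d F'" "anchored_above d G"
    and "F \<inter> G \<noteq> {}" "F' \<inter> G \<noteq> {}"
  shows "F \<inter> F' \<noteq> {}"
proof -
  obtain e where "G \<inter> {p. fst p + snd p = d} \<subseteq> {e}"
    using anchored_above_meets_line_once[OF assms(3)] ..
  moreover have "{p. fst p + snd p \<le> d} \<inter> {p. d \<le> fst p + snd p} \<subseteq> {p. fst p + snd p = d}"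
    by auto
  ultimately show ?thesis
    using meet_via_separated_set[OF anchored_below_subset[OF assms(1)] anchored_below_subset[OF assms(2)]
        anchored_above_subset[OF assms(3)] _ _ assms(4,5)] by blast
qed

lemma dominating_set_restrict_card_le:
  fixes frame :: "'v \<Rightarrow> (real \<times> real) set"
  assumes "finite X" "finite Y" "X \<inter> Y = {}"
    and dom: "dominating_set frame (X \<union> Y) Dom"
    and common_neighbour: "\<And>a b y. a \<in> X \<Longrightarrow> b \<in> X \<Longrightarrow> y \<in> Y \<Longrightarrow>
      frame a \<inter> frame y \<noteq> {} \<Longrightarrow> frame b \<inter> frame y \<noteq> {} \<Longrightarrow> frame a \<inter> frame b \<noteq> {}"
  shows "\<exists>Dom'. dominating_set frame X Dom' \<and> card Dom' \<le> card Dom"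
proof -
  have Dom_sub: "Dom \<subseteq> X \<union> Y" using dom by (simp add: dominating_set_def)
  have "finite Dom" using Dom_sub assms(1,2) finite_subset by blast
  define Z where "Z = {u \<in> Dom \<inter> Y. \<exists>x\<in>X. frame x \<inter> frame u \<noteq> {}}"
  define f where "f u = (SOME x. x \<in> X \<and> frame x \<inter> frame u \<noteq> {})" for u
  define Dom' where "Dom' = (Dom \<inter> X) \<union> f ` Z"
  have f_Z: "\<And>u. u \<in> Z \<Longrightarrow> f u \<in> X \<and> frame (f u) \<inter> frame u \<noteq> {}"
    unfolding Z_def f_def by (rule someI_ex) auto
  have "dominating_set frame X Dom'"
    unfolding dominating_set_def
  proof (intro conjI ballI)
    show "Dom' \<subseteq> X" using f_Z unfolding Dom'_def by blast
  next
    fix v assume v: "v \<in> X - Dom'"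
    then have "v \<in> X \<union> Y - Dom" unfolding Dom'_def by blast
    then obtain u where u: "u \<in> Dom" "u \<noteq> v" "frame u \<inter> frame v \<noteq> {}"
      using dom unfolding dominating_set_def by meson
    show "\<exists>w\<in>Dom'. w \<noteq> v \<and> frame w \<inter> frame v \<noteq> {}"
    proof (cases "u \<in> X")
      case True
      then show ?thesis using u unfolding Dom'_def by blast
    next
      case False
      with u Dom_sub have "u \<in> Y" by blast
      have vu: "frame v \<inter> frame u \<noteq> {}" using u(3) by blast
      with \<open>u \<in> Y\<close> u(1) v have "u \<in> Z" unfolding Z_def by blast
      then have "f u \<in> Dom'" "f u \<in> X" "frame (f u) \<inter> frame u \<noteq> {}"
        using f_Z unfolding Dom'_def by auto
      moreover have "frame (f u) \<inter> frame v \<noteq> {}"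
        using common_neighbour \<open>f u \<in> X\<close> v \<open>u \<in> Y\<close> \<open>frame (f u) \<inter> frame u \<noteq> {}\<close> vu
        by blast
      moreover have "f u \<noteq> v" using \<open>f u \<in> Dom'\<close> v by blast
      ultimately show ?thesis by blast
    qed
  qed
  moreover have "card Dom' \<le> card Dom"
  proof -
    have "card Dom' \<le> card (Dom \<inter> X) + card (f ` Z)"
      unfolding Dom'_def by (rule card_Un_le)
    also have "\<dots> \<le> card (Dom \<inter> X) + card (Dom \<inter> Y)"
      using \<open>finite Dom\<close> card_image_le[of Z f] card_mono[of "Dom \<inter> Y" Z]
      unfolding Z_def by fastforce
    also have "\<dots> = card Dom"
    proof -
      have "Dom = (Dom \<inter> X) \<union> (Dom \<inter> Y)" using Dom_sub by blast
      moreover have "card ((Dom \<inter> X) \<union> (Dom \<inter> Y)) = card (Dom \<inter> X) + card (Dom \<inter> Y)"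
        using \<open>finite Dom\<close> assms(3) by (intro card_Un_disjoint) auto
      ultimately show ?thesis by metis
    qed
    finally show ?thesis .
  qed
  ultimately show ?thesis by blast
qed

lemma min_dominating_set_card_le_restrict:
  fixes frame :: "'v \<Rightarrow> (real \<times> real) set"
  assumes "finite X" "finite Y" "X \<inter> Y = {}"
    and common_neighbour: "\<And>a b y. a \<in> X \<Longrightarrow> b \<in> X \<Longrightarrow> y \<in> Y \<Longrightarrow>
      frame a \<inter> frame y \<noteq> {} \<Longrightarrow> frame b \<inter> frame y \<noteq> {} \<Longrightarrow> frame a \<inter> frame b \<noteq> {}"
    and "min_dominating_set frame (X \<union> Y) OPT"
    and "min_dominating_set frame X OPTX"
  shows "card OPTX \<le> card OPT"
proof -
  have "dominating_set frame (X \<union> Y) OPT"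
    using assms(5) unfolding min_dominating_set_def by blast
  then have "\<exists>Dom'. dominating_set frame X Dom' \<and> card Dom' \<le> card OPT"
    by (rule dominating_set_restrict_card_le[OF assms(1-3)]) (rule common_neighbour)
  then obtain Dom' where "dominating_set frame X Dom'" "card Dom' \<le> card OPT" by blast
  moreover have "card OPTX \<le> card Dom'"
    using assms(6) \<open>dominating_set frame X Dom'\<close> unfolding min_dominating_set_def by blast
  ultimately show ?thesis by linarith
qed

theorem mainTheorem6:
  fixes d :: real and frame :: "'v \<Rightarrow> (real \<times> real) set"
    and X Y OPT OPTX OPTY :: "'v set"
  assumes "finite X" and "finite Y" and "X \<inter> Y = {}"
    and "\<forall>u\<in>X. anchored_above d (frame u)"
    and "\<forall>u\<in>Y. anchored_below d (frame u)"
    and "min_dominating_set frame (X \<union> Y) OPT"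
    and "min_dominating_set frame X OPTX"
    and "min_dominating_set frame Y OPTY"
  shows "card OPTX \<le> card OPT \<and> card OPTY \<le> card OPT"
proof
  show "card OPTX \<le> card OPT"
    by (rule min_dominating_set_card_le_restrict[OF assms(1-3) _ assms(6,7)])
      (use anchored_above_meet_via_anchored_below assms(4,5) in blast)
  show "card OPTY \<le> card OPT"
  proof (rule min_dominating_set_card_le_restrict[OF assms(2,1)])
    show "Y \<inter> X = {}" "min_dominating_set frame (Y \<union> X) OPT"
      using assms(3,6) by (auto simp: Un_commute)
  qed (use anchored_below_meet_via_anchored_above assms(4,5,8) in blast)+
qed

end
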